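(* Let $\Sigma=(\sigma_1,\dots,\sigma_k)$ be a mixed substitution system on a finite set of prototiles $\mathcal{F}$ in $\mathbb{R}^d$. Then $\mathbb{X}_{\Sigma,\Omega}\subset\mathbb{Y}_{\Sigma,\Omega}$.
   Context: Tiles are compact sets equal to the closure of their interior; patches are tessellations of bounded sets by tiles with pairwise disjoint interiors, tilings are tessellations of $\mathbb{R}^d$. $\mathcal{F}=\{T_1,\dots,T_n\}$ is a finite set of prototiles and $\mathcal{F}^*$ the set of patches of translates of prototiles up to translation. A substitution rule with inflation factor $\xi>1$ is a map $\sigma:\mathcal{F}\to\mathcal{F}^*$ with $\operatorname{supp}\sigma(T_i)=\xi T_i$, extended to patches tile by tile ($T_i+t\mapsto\sigma(T_i)+\xi t$); it is primitive if some power of its substitution matrix (entries $a_{ij}=$ number of tiles that are translates of $T_i$ in $\sigma(T_j)$) is strictly positive. A mixed substitution system is a tuple $\Sigma=(\sigma_1,\dots,\sigma_k)$ of primitive substitution rules on $\mathcal{F}$. Let $\mathcal{A}=\{1,\dots,k\}$, $\Omega=\mathcal{A}^{\mathbb{N}}$, and $w(m)=(w_1,\dots,w_m)$. For a finite word $a=(a_1,\dots,a_m)$ define $a.P=\sigma_{a_1}(\sigma_{a_2}(\cdots\sigma_{a_m}(P)\cdots))$ (left action) and $P.a=\sigma_{a_m}(\sigma_{a_{m-1}}(\cdots\sigma_{a_1}(P)\cdots))$ (right action). For $w\in\Omega$ let $\mathcal{P}_w=\{w(m).T:T\in\mathcal{F},m\in\mathbb{N}\}$ and $\mathcal{R}_w=\{T.w(m):T\in\mathcal{F},m\in\mathbb{N}\}$.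 $\mathbb{X}_{\Sigma,w}$ (resp. $\mathbb{Y}_{\Sigma,w}$) is the set of tilings of $\mathbb{R}^d$ every finite patch of which is a translate of a sub-patch of some element of $\mathcal{P}_w$ (resp. $\mathcal{R}_w$), and $\mathbb{X}_{\Sigma,\Omega}=\bigcup_{w\in\Omega}\mathbb{X}_{\Sigma,w}$, $\mathbb{Y}_{\Sigma,\Omega}=\bigcup_{w\in\Omega}\mathbb{Y}_{\Sigma,w}$. *)

theory Defs
  imports "HOL-Analysis.Analysis"
begin

definition is_tile :: "'a::euclidean_space set \<Rightarrow> bool" where
  "is_tile T \<longleftrightarrow> T \<noteq> {} \<and> compact T \<and> closure (interior T) = T"

definition tr :: "'a::euclidean_space \<Rightarrow> 'a set \<Rightarrow> 'a set" where
  "tr v T = (\<lambda>x. x + v) ` T"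

definition trp :: "'a::euclidean_space \<Rightarrow> 'a set set \<Rightarrow> 'a set set" where
  "trp v P = tr v ` P"

definition dil :: "real \<Rightarrow> 'a::euclidean_space set \<Rightarrow> 'a set" where
  "dil c T = (\<lambda>x. c *\<^sub>R x) ` T"

definition supp :: "'a set set \<Rightarrow> 'a set" where
  "supp P = \<Union> P"

definition is_patch :: "'a::euclidean_space set set \<Rightarrow> bool" where
  "is_patch P \<longleftrightarrow> (\<forall>T\<in>P. is_tile T) \<and>
     pairwise (\<lambda>S T. interior S \<inter> interior T = {}) P \<and> bounded (supp P)"

definition is_tiling :: "'a::euclidean_space set set \<Rightarrow> bool" where
  "is_tiling P \<longleftrightarrow> (\<forall>T\<in>P. is_tile T) \<and>
     pairwise (\<lambda>S T. interior S \<inter> interior T = {}) P \<and> supp P = UNIV"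

definition prototiles :: "'a::euclidean_space set set \<Rightarrow> bool" where
  "prototiles F \<longleftrightarrow> finite F \<and> F \<noteq> {} \<and> (\<forall>T\<in>F. is_tile T) \<and>
     (\<forall>S\<in>F. \<forall>T\<in>F. (\<exists>v. S = tr v T) \<longrightarrow> S = T)"

definition F_patch :: "'a::euclidean_space set set \<Rightarrow> 'a set set \<Rightarrow> bool" where
  "F_patch F P \<longleftrightarrow> is_patch P \<and> (\<forall>S\<in>P. \<exists>T\<in>F. \<exists>v. S = tr v T)"

definition subst_rule :: "'a::euclidean_space set set \<Rightarrow> real \<Rightarrow> ('a set \<Rightarrow> 'a set set) \<Rightarrow> bool" where
  "subst_rule F \<xi> \<sigma> \<longleftrightarrow> \<xi> > 1 \<and> (\<forall>T\<in>F. F_patch F (\<sigma> T) \<and> supp (\<sigma> T) = dil \<xi> T)"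

definition subst_matrix :: "('a::euclidean_space set \<Rightarrow> 'a set set) \<Rightarrow> 'a set \<Rightarrow> 'a set \<Rightarrow> nat" where
  "subst_matrix \<sigma> S T = card {U \<in> \<sigma> T. \<exists>v. U = tr v S}"

fun mat_pow :: "'b set \<Rightarrow> ('b \<Rightarrow> 'b \<Rightarrow> nat) \<Rightarrow> nat \<Rightarrow> 'b \<Rightarrow> 'b \<Rightarrow> nat" where
  "mat_pow I A 0 S T = (if S = T then 1 else 0)"
| "mat_pow I A (Suc p) S T = (\<Sum>U\<in>I. A S U * mat_pow I A p U T)"

definition primitive :: "'a::euclidean_space set set \<Rightarrow> ('a set \<Rightarrow> 'a set set) \<Rightarrow> bool" where
  "primitive F \<sigma> \<longleftrightarrow> (\<exists>p>0. \<forall>S\<in>F. \<forall>T\<in>F. mat_pow F (subst_matrix \<sigma>) p S T > 0)"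

definition subst_patch :: "'a::euclidean_space set set \<Rightarrow> real \<Rightarrow> ('a set \<Rightarrow> 'a set set)
     \<Rightarrow> 'a set set \<Rightarrow> 'a set set" where
  "subst_patch F \<xi> \<sigma> P = \<Union> {trp (\<xi> *\<^sub>R t) (\<sigma> T) | T t. T \<in> F \<and> tr t T \<in> P}"

definition mixed_system :: "'a::euclidean_space set set \<Rightarrow> nat \<Rightarrow> (nat \<Rightarrow> real)
     \<Rightarrow> (nat \<Rightarrow> 'a set \<Rightarrow> 'a set set) \<Rightarrow> bool" where
  "mixed_system F k \<xi> \<sigma> \<longleftrightarrow> prototiles F \<and> k \<ge> 1 \<and>
     (\<forall>i\<in>{1..k}. subst_rule F (\<xi> i) (\<sigma> i) \<and> primitive F (\<sigma> i))"

text \<open>Left action \<open>a.P = \<sigma>_{a1}(\<dots>\<sigma>_{am}(P))\<close>, right action \<open>P.a = \<sigma>_{am}(\<dots>\<sigma>_{a1}(P))\<close>.\<close>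
definition left_act :: "'a::euclidean_space set set \<Rightarrow> (nat \<Rightarrow> real) \<Rightarrow> (nat \<Rightarrow> 'a set \<Rightarrow> 'a set set)
     \<Rightarrow> nat list \<Rightarrow> 'a set set \<Rightarrow> 'a set set" where
  "left_act F \<xi> \<sigma> a P = foldr (\<lambda>i Q. subst_patch F (\<xi> i) (\<sigma> i) Q) a P"

definition right_act :: "'a::euclidean_space set set \<Rightarrow> (nat \<Rightarrow> real) \<Rightarrow> (nat \<Rightarrow> 'a set \<Rightarrow> 'a set set)
     \<Rightarrow> 'a set set \<Rightarrow> nat list \<Rightarrow> 'a set set" where
  "right_act F \<xi> \<sigma> P a = foldl (\<lambda>Q i. subst_patch F (\<xi> i) (\<sigma> i) Q) P a"

text \<open>\<open>\<Omega> = {1..k}^\<nat>\<close>, sequences written \<open>w 0, w 1, \<dots>\<close> (i.e. \<open>w_1 = w 0\<close>).\<close>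
definition Omega :: "nat \<Rightarrow> (nat \<Rightarrow> nat) set" where
  "Omega k = {w. \<forall>n. w n \<in> {1..k}}"

definition prefix :: "(nat \<Rightarrow> nat) \<Rightarrow> nat \<Rightarrow> nat list" where
  "prefix w m = map w [0..<m]"

definition P_w where
  "P_w F \<xi> \<sigma> w = {left_act F \<xi> \<sigma> (prefix w m) {T} | T m. T \<in> F \<and> m \<ge> 1}"

definition R_w where
  "R_w F \<xi> \<sigma> w = {right_act F \<xi> \<sigma> {T} (prefix w m) | T m. T \<in> F \<and> m \<ge> 1}"

definition hull_tilings :: "'a::euclidean_space set set set \<Rightarrow> 'a set set set" where
  "hull_tilings \<P> = {\<T>. is_tiling \<T> \<and>
     (\<forall>Q. Q \<subseteq> \<T> \<and> finite Q \<longrightarrow> (\<exists>P\<in>\<P>. \<exists>v. trp v Q \<subseteq> P))}"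

definition X_w where "X_w F \<xi> \<sigma> w = hull_tilings (P_w F \<xi> \<sigma> w)"
definition Y_w where "Y_w F \<xi> \<sigma> w = hull_tilings (R_w F \<xi> \<sigma> w)"

definition X_Omega where "X_Omega F k \<xi> \<sigma> = (\<Union>w\<in>Omega k. X_w F \<xi> \<sigma> w)"
definition Y_Omega where "Y_Omega F k \<xi> \<sigma> = (\<Union>w\<in>Omega k. Y_w F \<xi> \<sigma> w)"

end

theory Submission
  imports Defs
begin

text \<open>
  Given \<open>w\<close>, let \<open>w'\<close> be the concatenation of the reversed prefixes
  \<open>w\<^sub>1, w\<^sub>2w\<^sub>1, w\<^sub>3w\<^sub>2w\<^sub>1, \<dots>\<close>.
  A left-action patch \<open>w(m).T\<close> equals the right-action patch \<open>T.rev(w(m))\<close>, and the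
  prefix of \<open>w'\<close> ending with the block \<open>rev(w(m))\<close> is \<open>u @ rev(w(m))\<close> for a word \<open>u\<close>.
  By primitivity every prototile is contained, up to translation, in the
  image of some prototile under any single substitution, hence under any word:
  \<open>T\<close> occurs in \<open>T'.u\<close> for some prototile \<open>T'\<close>. Substituting further by \<open>rev(w(m))\<close>
  shows that \<open>w(m).T\<close> occurs in \<open>T'.w'(n)\<close>. So every patch admitted by \<open>w\<close> for
  the left action is admitted by \<open>w'\<close> for the right action.
\<close>

definition occurs_in :: "'a::euclidean_space set set \<Rightarrow> 'a set set \<Rightarrow> bool" where
  "occurs_in P Q \<longleftrightarrow> (\<exists>v. trp v P \<subseteq> Q)"

lemma tr_tr: "tr a (tr b T) = tr (b + a) T"
  unfolding tr_def by (auto simp: image_image add.assoc)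

lemma tr_0 [simp]: "tr 0 T = T"
  unfolding tr_def by simp

lemma trp_trp: "trp a (trp b P) = trp (b + a) P"
  unfolding trp_def by (auto simp: image_image tr_tr)

lemma trp_0 [simp]: "trp 0 P = P"
  unfolding trp_def by simp

lemma trp_mono: "P \<subseteq> Q \<Longrightarrow> trp a P \<subseteq> trp a Q"
  unfolding trp_def by auto

lemma occurs_in_subset: "P \<subseteq> Q \<Longrightarrow> occurs_in P Q"
  unfolding occurs_in_def by (metis trp_0)

lemma occurs_in_trans: "occurs_in P Q \<Longrightarrow> occurs_in Q R \<Longrightarrow> occurs_in P R"
  unfolding occurs_in_def by (metis trp_trp trp_mono order_trans)

lemma mem_hull_tilings_iff:
  "X \<in> hull_tilings \<P> \<longleftrightarrow>
     is_tiling X \<and> (\<forall>Q. Q \<subseteq> X \<and> finite Q \<longrightarrow> (\<exists>P\<in>\<P>. occurs_in Q P))"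
  by (simp add: hull_tilings_def occurs_in_def)

lemma hull_tilings_mono:
  assumes "\<forall>P\<in>\<P>. \<exists>P'\<in>\<P>'. occurs_in P P'"
  shows "hull_tilings \<P> \<subseteq> hull_tilings \<P>'"
  using assms unfolding subset_iff mem_hull_tilings_iff by (meson occurs_in_trans)

lemma subst_patch_trp_subset:
  assumes "trp v P \<subseteq> Q"
  shows "trp (c *\<^sub>R v) (subst_patch F c s P) \<subseteq> subst_patch F c s Q"
proof
  fix x assume "x \<in> trp (c *\<^sub>R v) (subst_patch F c s P)"
  then obtain T t S where T: "T \<in> F" "tr t T \<in> P" "S \<in> s T"
    and x: "x = tr (c *\<^sub>R v) (tr (c *\<^sub>R t) S)"
    unfolding subst_patch_def trp_def by blast
  have "tr (t + v) T \<in> Q"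
    using assms T(2) unfolding trp_def by (metis image_subset_iff tr_tr)
  moreover have "x \<in> trp (c *\<^sub>R (t + v)) (s T)"
    using x T(3) unfolding trp_def by (simp add: tr_tr scaleR_add_right)
  ultimately show "x \<in> subst_patch F c s Q"
    unfolding subst_patch_def using T(1) by blast
qed

lemma occurs_in_subst_patch:
  "occurs_in P Q \<Longrightarrow> occurs_in (subst_patch F c s P) (subst_patch F c s Q)"
  unfolding occurs_in_def using subst_patch_trp_subset by blast

lemma occurs_in_right_act:
  "occurs_in P Q \<Longrightarrow> occurs_in (right_act F \<xi> \<sigma> P u) (right_act F \<xi> \<sigma> Q u)"
proof (induction u arbitrary: P Q)
  case Nil
  then show ?case by (simp add: right_act_def)
next
  case (Cons i u)
  then show ?case by (simp add: right_act_def occurs_in_subst_patch)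
qed

lemma right_act_snoc:
  "right_act F \<xi> \<sigma> P (u @ [i]) = subst_patch F (\<xi> i) (\<sigma> i) (right_act F \<xi> \<sigma> P u)"
  by (simp add: right_act_def)

lemma right_act_append:
  "right_act F \<xi> \<sigma> P (u @ v) = right_act F \<xi> \<sigma> (right_act F \<xi> \<sigma> P u) v"
  by (simp add: right_act_def)

lemma left_act_eq_right_act_rev: "left_act F \<xi> \<sigma> a P = right_act F \<xi> \<sigma> P (rev a)"
  by (simp add: left_act_def right_act_def foldr_conv_foldl)

lemma subset_subst_patch_singleton:
  assumes "U \<in> F"
  shows "s U \<subseteq> subst_patch F c s {U}"
proof -
  have "trp (c *\<^sub>R 0) (s U) \<in> {trp (c *\<^sub>R t) (s T) | T t. T \<in> F \<and> tr t T \<in> {U}}"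
    using assms by fastforce
  then show ?thesis
    unfolding subst_patch_def by auto
qed

lemma primitive_ex_parent:
  assumes "primitive F \<sigma>" and "T \<in> F"
  shows "\<exists>U\<in>F. \<exists>t. tr t T \<in> \<sigma> U"
proof -
  obtain p where "p > 0" and pos: "\<forall>S\<in>F. \<forall>T\<in>F. mat_pow F (subst_matrix \<sigma>) p S T > 0"
    using assms(1) unfolding primitive_def by blast
  then obtain q where "p = Suc q" using gr0_implies_Suc by blast
  with pos assms(2) have "(\<Sum>U\<in>F. subst_matrix \<sigma> T U * mat_pow F (subst_matrix \<sigma>) q U T) > 0"
    by fastforce
  then obtain U where "U \<in> F" and "subst_matrix \<sigma> T U \<noteq> 0"
    by (metis (no_types, lifting) less_irrefl mult_eq_0_iff sum.neutral)
  then have "{V \<in> \<sigma> U. \<exists>v. V = tr v T} \<noteq> {}"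
    unfolding subst_matrix_def by (metis card.empty)
  with \<open>U \<in> F\<close> show ?thesis by blast
qed

lemma prototile_occurs_in_right_act:
  assumes "\<forall>i\<in>set u. primitive F (\<sigma> i)" and "T \<in> F"
  shows "\<exists>T'\<in>F. occurs_in {T} (right_act F \<xi> \<sigma> {T'} u)"
  using assms
proof (induction u arbitrary: T rule: rev_induct)
  case Nil
  then show ?case by (auto simp: right_act_def intro: occurs_in_subset)
next
  case (snoc i u)
  obtain U t where U: "U \<in> F" "tr t T \<in> \<sigma> i U"
    using primitive_ex_parent snoc.prems by force
  have "occurs_in {T} (subst_patch F (\<xi> i) (\<sigma> i) {U})"
    unfolding occurs_in_def
    using U subset_subst_patch_singleton[OF U(1)] by (auto simp: trp_def)
  moreover obtain T' where "T' \<in> F" and "occurs_in {U} (right_act F \<xi> \<sigma> {T'} u)"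
    using snoc.IH U(1) snoc.prems(1) by auto
  ultimately have "occurs_in {T} (right_act F \<xi> \<sigma> {T'} (u @ [i]))"
    unfolding right_act_snoc by (blast intro: occurs_in_trans occurs_in_subst_patch)
  with \<open>T' \<in> F\<close> show ?case by blast
qed

fun blocks :: "(nat \<Rightarrow> nat) \<Rightarrow> nat \<Rightarrow> nat list" where
  "blocks w 0 = []"
| "blocks w (Suc m) = blocks w m @ rev (prefix w (Suc m))"

definition block_seq :: "(nat \<Rightarrow> nat) \<Rightarrow> nat \<Rightarrow> nat" where
  "block_seq w n = blocks w (Suc n) ! n"

lemma length_blocks_ge: "m \<le> length (blocks w m)"
  by (induction m) (auto simp: prefix_def)

lemma blocks_append: "m \<le> m' \<Longrightarrow> \<exists>ys. blocks w m' = blocks w m @ ys"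
  by (induction m' rule: dec_induct) auto

lemma nth_blocks_stable:
  assumes "n < length (blocks w m)" and "m \<le> m'"
  shows "blocks w m' ! n = blocks w m ! n"
proof -
  obtain ys where "blocks w m' = blocks w m @ ys"
    using blocks_append[OF assms(2)] by blast
  with assms(1) show ?thesis by (simp add: nth_append)
qed

lemma nth_blocks: "n < length (blocks w m) \<Longrightarrow> blocks w m ! n = block_seq w n"
  unfolding block_seq_def
  by (metis le_cases length_blocks_ge nth_blocks_stable Suc_le_eq)

lemma prefix_block_seq: "prefix (block_seq w) (length (blocks w m)) = blocks w m"
  by (rule nth_equalityI) (simp_all add: prefix_def nth_blocks)

lemma set_blocks: "set (blocks w m) \<subseteq> range w"
  by (induction m) (auto simp: prefix_def)

lemma block_seq_in_range: "block_seq w n \<in> range w"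
  unfolding block_seq_def
  by (metis set_blocks length_blocks_ge Suc_le_eq nth_mem subsetD)

lemma P_w_occurs_in_R_w_block_seq:
  assumes prim: "\<forall>n. primitive F (\<sigma> (w n))" and "P \<in> P_w F \<xi> \<sigma> w"
  shows "\<exists>P'\<in>R_w F \<xi> \<sigma> (block_seq w). occurs_in P P'"
proof -
  obtain T m where "T \<in> F" and "m \<ge> 1" and P: "P = left_act F \<xi> \<sigma> (prefix w m) {T}"
    using assms(2) unfolding P_w_def by blast
  then obtain m' where m: "m = Suc m'" using not0_implies_Suc by force
  obtain T' where "T' \<in> F" and occ: "occurs_in {T} (right_act F \<xi> \<sigma> {T'} (blocks w m'))"
    using prototile_occurs_in_right_act[OF _ \<open>T \<in> F\<close>] prim set_blocks by blast
  from occ have "occurs_in P (right_act F \<xi> \<sigma> {T'} (blocks w m' @ rev (prefix w m)))"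
    unfolding P left_act_eq_right_act_rev right_act_append by (rule occurs_in_right_act)
  moreover have "blocks w m' @ rev (prefix w m) = prefix (block_seq w) (length (blocks w m))"
    unfolding prefix_block_seq m by simp
  moreover have "length (blocks w m) \<ge> 1"
    using length_blocks_ge[of m w] \<open>m \<ge> 1\<close> by simp
  ultimately show ?thesis
    unfolding R_w_def using \<open>T' \<in> F\<close> by force
qed

lemma X_w_subset_Y_w_block_seq:
  "\<forall>n. primitive F (\<sigma> (w n)) \<Longrightarrow> X_w F \<xi> \<sigma> w \<subseteq> Y_w F \<xi> \<sigma> (block_seq w)"
  unfolding X_w_def Y_w_def
  by (intro hull_tilings_mono ballI P_w_occurs_in_R_w_block_seq)

lemma block_seq_in_Omega:
  assumes "w \<in> Omega k"
  shows "block_seq w \<in> Omega k"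
proof -
  have "block_seq w n \<in> {1..k}" for n
    using block_seq_in_range[of w n] assms unfolding Omega_def by auto
  then show ?thesis unfolding Omega_def by blast
qed

theorem lemma6p2:
  fixes F :: "'a::euclidean_space set set"
    and k :: nat and \<xi> :: "nat \<Rightarrow> real" and \<sigma> :: "nat \<Rightarrow> 'a set \<Rightarrow> 'a set set"
  assumes "mixed_system F k \<xi> \<sigma>"
  shows "X_Omega F k \<xi> \<sigma> \<subseteq> Y_Omega F k \<xi> \<sigma>"
proof
  fix X assume "X \<in> X_Omega F k \<xi> \<sigma>"
  then obtain w where w: "w \<in> Omega k" and "X \<in> X_w F \<xi> \<sigma> w"
    unfolding X_Omega_def by blast
  moreover have "\<forall>n. primitive F (\<sigma> (w n))"
    using assms w unfolding mixed_system_def Omega_def by simp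
  ultimately have "X \<in> Y_w F \<xi> \<sigma> (block_seq w)"
    using X_w_subset_Y_w_block_seq by blast
  with block_seq_in_Omega[OF w] show "X \<in> Y_Omega F k \<xi> \<sigma>"
    unfolding Y_Omega_def by blast
qed

end
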